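(* Consider the network $\Sigma$ (with all the structural assumptions in the context), let $M\in\mathbb{N}$, and let $\mathcal{A}_i\subset\mathbb{R}^{n_i}$, $i\in\mathbb{N}$, be nonempty closed sets such that $(\mathcal{A}_i)_{i\in\mathbb{N}}$ is uniformly bounded (there is $C>0$ with $|z|\le C$ for all $i$ and all $z\in\mathcal{A}_i$). Suppose that for each $i\in\mathbb{N}$ there exist a continuous $W_i:\mathbb{R}^{n_i}\to[0,\infty)$, functions $\underline\omega_i,\overline\omega_i\in\mathcal{K}_\infty$, $\gamma_{ij}\in\mathcal{K}_\infty\cup\{0\}$ ($j\in\mathbb{N}$) and $\gamma_{iu}\in\mathcal{K}$ such that (1) $\underline\omega_i(|\xi_i|_{\mathcal{A}_i})\le W_i(\xi_i)\le\overline\omega_i(|\xi_i|_{\mathcal{A}_i})$ for all $\xi_i\in\mathbb{R}^{n_i}$; (2) $W_i(x_i(M,\xi,u))\le\max\{\sup_{j\in\mathbb{N}}\gamma_{ij}(W_j(\xi_j)),\gamma_{iu}(\|u\|_\infty)\}$ for all $\xi\in X$, $u\in\mathcal{U}$; and that these satisfy the uniformity conditions: there exist $\underline\omega,\overline\omega\in\mathcal{K}_\infty$ with $\underline\omega\le\underline\omega_i\le\overline\omega_i\le\overline\omega$ for all $i$; there exists $\alpha\in\mathcal{K}_\infty$ with $\alpha(s)<s$ for all $s>0$ and $\gamma_{ij}\le\alpha$ for all $i,j$; and there is $\bar\gamma_u\in\mathcal{K}$ with $\gamma_{iu}\le\bar\gamma_u$ for all $i$. Then $\Sigma^M$ is well-posed,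 i.e. $f^M(x,(u_0,\dots,u_{M-1}))\in X$ for all $x\in X$ and $u_0,\dots,u_{M-1}\in U$.
   Context: For each $i\in\mathbb{N}$ fix positive integers $n_i,p_i$, norms $|\cdot|$ on $\mathbb{R}^{n_i},\mathbb{R}^{p_i}$, and a finite set $I_i\subset\mathbb{N}\setminus\{i\}$ such that each set $\{j\in\mathbb{N}: i\in I_j\}$ is finite; $X(I_i)=\prod_{j\in I_i}\mathbb{R}^{n_j}$ with norm $\sup_{j\in I_i}|x_j|$; $f_i:\mathbb{R}^{n_i}\times X(I_i)\times\mathbb{R}^{p_i}\to\mathbb{R}^{n_i}$ continuous. $X_E=\prod_i\mathbb{R}^{n_i}$; $X$ (resp. $U$) the subspace of sequences $(x_i)$ with $x_i\in\mathbb{R}^{n_i}$ (resp. $(u_i)$, $u_i\in\mathbb{R}^{p_i}$) with finite norm $\sup_i|x_i|=:|x|_\infty$. $f:X_E\times U\to X_E$, $f(x,u)_i=f_i(x_i,(x_j)_{j\in I_i},u_i)$; network $\Sigma$: $x(k+1)=f(x(k),u(k))$. $\mathcal{U}$: sequences $u:\mathbb{N}_0\to U$ with $\|u\|_\infty=\sup_k|u(k)|_\infty<\infty$; for $\xi\in X_E$, $x(k,\xi,u)\in X_E$ denotes the solution with $x(0)=\xi$ and $x_i(k,\xi,u)$ its $i$-th component. Iterates: $f^1=f$, $f^{k+1}(x,(u_0,\dots,u_k))=f(f^k(x,(u_0,\dots,u_{k-1})),u_k)$. $|z|_{\mathcal{A}_i}=\inf_{y\in\mathcal{A}_i}|z-y|$.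 $\mathcal{K}$, $\mathcal{K}_\infty$ are the standard comparison classes; inequalities between functions are pointwise. *)

theory Defs
  imports "HOL-Analysis.Analysis"
begin

text \<open>A vector of R^n is represented as a function nat => real vanishing from index n on.
  A network state is a sequence of such vectors.\<close>

type_synonym vec = "nat \<Rightarrow> real"
type_synonym state = "nat \<Rightarrow> vec"

definition Rn :: "nat \<Rightarrow> vec set" where
  "Rn n = {v. \<forall>k\<ge>n. v k = 0}"

definition is_norm_on :: "vec set \<Rightarrow> (vec \<Rightarrow> real) \<Rightarrow> bool" where
  "is_norm_on S N \<longleftrightarrow>
     (\<forall>x\<in>S. N x \<ge> 0 \<and> (N x = 0 \<longleftrightarrow> x = (\<lambda>_. 0))) \<and>
     (\<forall>x\<in>S. \<forall>c::real. N (\<lambda>k. c * x k) = \<bar>c\<bar> * N x) \<and>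
     (\<forall>x\<in>S. \<forall>y\<in>S. N (\<lambda>k. x k + y k) \<le> N x + N y)"

definition classK :: "(real \<Rightarrow> real) \<Rightarrow> bool" where
  "classK g \<longleftrightarrow> continuous_on {0..} g \<and> g 0 = 0 \<and> strict_mono_on {0..} g"

definition classKinf :: "(real \<Rightarrow> real) \<Rightarrow> bool" where
  "classKinf g \<longleftrightarrow> classK g \<and> filterlim g at_top at_top"

definition setdist_N :: "(vec \<Rightarrow> real) \<Rightarrow> vec set \<Rightarrow> vec \<Rightarrow> real" where
  "setdist_N N A z = Inf ((\<lambda>y. N (\<lambda>k. z k - y k)) ` A)"

definition inX :: "(nat \<Rightarrow> nat) \<Rightarrow> (nat \<Rightarrow> vec \<Rightarrow> real) \<Rightarrow> state \<Rightarrow> bool" where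
  "inX n N x \<longleftrightarrow> (\<forall>i. x i \<in> Rn (n i)) \<and> bdd_above (range (\<lambda>i. N i (x i)))"

definition supnorm :: "(nat \<Rightarrow> vec \<Rightarrow> real) \<Rightarrow> state \<Rightarrow> real" where
  "supnorm N x = (SUP i. N i (x i))"

definition inUU :: "(nat \<Rightarrow> nat) \<Rightarrow> (nat \<Rightarrow> vec \<Rightarrow> real) \<Rightarrow> (nat \<Rightarrow> state) \<Rightarrow> bool" where
  "inUU p Nu u \<longleftrightarrow> (\<forall>k. inX p Nu (u k)) \<and> bdd_above (range (\<lambda>k. supnorm Nu (u k)))"

definition unorm :: "(nat \<Rightarrow> vec \<Rightarrow> real) \<Rightarrow> (nat \<Rightarrow> state) \<Rightarrow> real" where
  "unorm Nu u = (SUP k. supnorm Nu (u k))"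

definition netmap :: "(nat \<Rightarrow> vec \<Rightarrow> state \<Rightarrow> vec \<Rightarrow> vec) \<Rightarrow> (nat \<Rightarrow> nat set) \<Rightarrow> state \<Rightarrow> state \<Rightarrow> state" where
  "netmap f I x u = (\<lambda>i. f i (x i) (\<lambda>j. if j \<in> I i then x j else (\<lambda>_. 0)) (u i))"

text \<open>Solution x(k, xi, u); also the iterate f^k(xi,(u_0,...,u_{k-1})) for k >= 1.\<close>
primrec traj :: "(nat \<Rightarrow> vec \<Rightarrow> state \<Rightarrow> vec \<Rightarrow> vec) \<Rightarrow> (nat \<Rightarrow> nat set) \<Rightarrow> state \<Rightarrow> (nat \<Rightarrow> state) \<Rightarrow> nat \<Rightarrow> state" where
  "traj f I \<xi> u 0 = \<xi>"
| "traj f I \<xi> u (Suc k) = netmap f I (traj f I \<xi> u k) (u k)"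

definition fdom :: "(nat \<Rightarrow> nat) \<Rightarrow> (nat \<Rightarrow> nat) \<Rightarrow> (nat \<Rightarrow> nat set) \<Rightarrow> nat \<Rightarrow> (vec \<times> state \<times> vec) set" where
  "fdom n p I i = {(a, b, c). a \<in> Rn (n i) \<and> (\<forall>j\<in>I i. b j \<in> Rn (n j)) \<and>
                      (\<forall>j. j \<notin> I i \<longrightarrow> b j = (\<lambda>_. 0)) \<and> c \<in> Rn (p i)}"

end

theory Submission
  imports Defs
begin

text \<open>Pad the finitely many inputs with zeros to an admissible input u. Since every gain
  \<gamma> i j lies below \<alpha> \<le> id, the decay estimate bounds W i (x i (M)) by the larger of
  sup j. W j (\<xi> j) and the uniform input gain at the norm of u. That supremum is finite, since
  W j (\<xi> j) \<le> wU (|\<xi>| + C) with the uniform upper comparison function wU and the bound C on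
  the A j. Conversely W i (x i (M)) dominates wL of the distance of x i (M) to A i with the uniform
  lower comparison function wL, which is unbounded; so these distances, and with them the norms
  of the x i (M), are bounded uniformly in i.\<close>

lemma is_norm_on_nonneg: "is_norm_on S Nf \<Longrightarrow> x \<in> S \<Longrightarrow> Nf x \<ge> 0"
  unfolding is_norm_on_def by blast

lemma is_norm_on_zero: "is_norm_on S Nf \<Longrightarrow> (\<lambda>_. 0) \<in> S \<Longrightarrow> Nf (\<lambda>_. 0) = 0"
  unfolding is_norm_on_def by blast

lemma is_norm_on_triangle:
  "is_norm_on S Nf \<Longrightarrow> x \<in> S \<Longrightarrow> y \<in> S \<Longrightarrow> Nf (\<lambda>k. x k + y k) \<le> Nf x + Nf y"
  unfolding is_norm_on_def by blast

lemma is_norm_on_uminus: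
  assumes "is_norm_on S Nf" "x \<in> S"
  shows "Nf (\<lambda>k. - x k) = Nf x"
proof -
  have "Nf (\<lambda>k. (-1) * x k) = \<bar>-1\<bar> * Nf x"
    using assms unfolding is_norm_on_def by blast
  then show ?thesis by simp
qed

lemma Rn_zero: "(\<lambda>_. 0) \<in> Rn m"
  by (simp add: Rn_def)

lemma Rn_uminus: "x \<in> Rn m \<Longrightarrow> (\<lambda>k. - x k) \<in> Rn m"
  by (simp add: Rn_def)

lemma Rn_diff: "x \<in> Rn m \<Longrightarrow> y \<in> Rn m \<Longrightarrow> (\<lambda>k. x k - y k) \<in> Rn m"
  by (simp add: Rn_def)

lemma is_norm_on_Rn_diff_le:
  assumes "is_norm_on (Rn m) Nf" "x \<in> Rn m" "y \<in> Rn m"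
  shows "Nf (\<lambda>k. x k - y k) \<le> Nf x + Nf y"
  using is_norm_on_triangle[OF assms(1,2) Rn_uminus[OF assms(3)]]
    is_norm_on_uminus[OF assms(1,3)] by simp

lemma is_norm_on_Rn_le_diff_add:
  assumes "is_norm_on (Rn m) Nf" "x \<in> Rn m" "y \<in> Rn m"
  shows "Nf x \<le> Nf (\<lambda>k. x k - y k) + Nf y"
  using is_norm_on_triangle[OF assms(1) Rn_diff[OF assms(2,3)] assms(3)] by simp

lemma bdd_below_setdist_N_image:
  assumes "is_norm_on (Rn m) Nf" "A \<subseteq> Rn m" "z \<in> Rn m"
  shows "bdd_below ((\<lambda>y. Nf (\<lambda>k. z k - y k)) ` A)"
  using assms is_norm_on_nonneg[OF assms(1) Rn_diff] by (auto intro!: bdd_belowI[where m = 0])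

lemma setdist_N_nonneg:
  assumes "is_norm_on (Rn m) Nf" "A \<subseteq> Rn m" "A \<noteq> {}" "z \<in> Rn m"
  shows "setdist_N Nf A z \<ge> 0"
  unfolding setdist_N_def using assms is_norm_on_nonneg[OF assms(1) Rn_diff]
  by (intro cInf_greatest) auto

lemma setdist_N_le_norm_add:
  assumes "is_norm_on (Rn m) Nf" "A \<subseteq> Rn m" "z \<in> Rn m" "a \<in> A"
  shows "setdist_N Nf A z \<le> Nf z + Nf a"
proof -
  have "setdist_N Nf A z \<le> Nf (\<lambda>k. z k - a k)"
    unfolding setdist_N_def using bdd_below_setdist_N_image[OF assms(1-3)] assms(4)
    by (simp add: cInf_lower)
  also have "\<dots> \<le> Nf z + Nf a"
    using is_norm_on_Rn_diff_le[OF assms(1,3)] assms(2,4) by blast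
  finally show ?thesis .
qed

lemma norm_le_setdist_N_add:
  assumes "is_norm_on (Rn m) Nf" "A \<subseteq> Rn m" "A \<noteq> {}" "z \<in> Rn m"
    and bound: "\<forall>a\<in>A. Nf a \<le> C"
  shows "Nf z \<le> setdist_N Nf A z + C"
proof -
  have "Nf z - C \<le> Nf (\<lambda>k. z k - a k)" if "a \<in> A" for a
    using is_norm_on_Rn_le_diff_add[OF assms(1,4), of a] assms(2) bound that by force
  then have "Nf z - C \<le> setdist_N Nf A z"
    unfolding setdist_N_def using assms(3) by (intro cInf_greatest) auto
  then show ?thesis by simp
qed

lemma classK_mono: "classK g \<Longrightarrow> 0 \<le> s \<Longrightarrow> s \<le> t \<Longrightarrow> g s \<le> g t"
  unfolding classK_def strict_mono_on_def by (cases "s = t") (auto intro: less_imp_le)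

lemma classKinf_sublevel_bounded:
  assumes "classKinf w"
  obtains D where "\<And>s. w s \<le> K \<Longrightarrow> s \<le> D"
proof -
  have "\<forall>\<^sub>F s in at_top. w s > K"
    using assms unfolding classKinf_def by (simp add: filterlim_at_top_dense)
  then obtain D where "\<And>s. s \<ge> D \<Longrightarrow> w s > K"
    by (auto simp: eventually_at_top_linorder)
  then show thesis
    by (intro that[of D]) (meson linorder_le_cases not_le)
qed

lemma le_max_of_ereal_le_max_SUP_gains:
  assumes "ereal v \<le> max (SUP j. ereal (\<gamma> j (w j))) (ereal r)"
    and "\<forall>j. 0 \<le> w j \<and> w j \<le> K"
    and "\<forall>j. \<forall>s\<ge>0. \<gamma> j s \<le> \<alpha> s" "\<forall>s>0. \<alpha> s < s" "\<alpha> 0 = 0"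
    and "r \<le> R"
  shows "v \<le> max K R"
proof -
  have "(SUP j. ereal (\<gamma> j (w j))) \<le> ereal K"
  proof (rule SUP_least)
    fix j
    have "0 \<le> w j"
      using assms(2) by blast
    then have "\<alpha> (w j) \<le> w j"
      using assms(4)[rule_format, of "w j"] assms(5) by (cases "w j = 0") auto
    then show "ereal (\<gamma> j (w j)) \<le> ereal K"
      using assms(2,3) \<open>0 \<le> w j\<close> by (meson ereal_less_eq(3) order_trans)
  qed
  then have "ereal v \<le> max (ereal K) (ereal R)"
    using assms(1,6) by (meson ereal_less_eq(3) max.mono order_trans)
  then show ?thesis
    by (simp add: max_def split: if_splits)
qed

lemma traj_cong: "(\<forall>j<k. u j = v j) \<Longrightarrow> traj f I x u k = traj f I x v k"
  by (induction k) auto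

lemma traj_in_Rn:
  assumes f_range: "\<forall>i. \<forall>(a, b, c)\<in>fdom n p I i. f i a b c \<in> Rn (n i)"
    and "\<forall>i. x i \<in> Rn (n i)" and "\<forall>k i. u k i \<in> Rn (p i)"
  shows "traj f I x u k i \<in> Rn (n i)"
proof (induction k arbitrary: i)
  case 0
  then show ?case using assms(2) by simp
next
  case (Suc k)
  have "(traj f I x u k i, \<lambda>j. if j \<in> I i then traj f I x u k j else (\<lambda>_. 0), u k i)
      \<in> fdom n p I i"
    using Suc assms(3) by (simp add: fdom_def)
  then show ?case
    using f_range by (fastforce simp: netmap_def)
qed

lemma inX_zero:
  assumes "\<forall>i. is_norm_on (Rn (p i)) (Nu i)"
  shows "inX p Nu (\<lambda>_ _. 0)"
proof -
  have "Nu i (\<lambda>_. 0) = 0" for i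
    using assms is_norm_on_zero Rn_zero by blast
  then show ?thesis
    by (simp add: inX_def Rn_zero)
qed

lemma inUU_pad_zero:
  assumes "\<forall>i. is_norm_on (Rn (p i)) (Nu i)" "\<forall>k<M. inX p Nu (us k)"
  shows "inUU p Nu (\<lambda>k. if k < M then us k else (\<lambda>_ _. 0))" (is "inUU p Nu ?u")
proof -
  have inX: "inX p Nu (?u k)" for k
    using assms inX_zero by simp
  have "range (\<lambda>k. supnorm Nu (?u k))
      \<subseteq> insert (supnorm Nu (\<lambda>_ _. 0)) ((\<lambda>k. supnorm Nu (us k)) ` {..<M})"
    by auto
  then have "bdd_above (range (\<lambda>k. supnorm Nu (?u k)))"
    by (rule bdd_above_mono[OF bdd_above_finite, rotated]) simp
  then show ?thesis
    unfolding inUU_def using inX by simp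
qed

lemma unorm_nonneg:
  assumes "\<forall>i. is_norm_on (Rn (p i)) (Nu i)" "inUU p Nu u"
  shows "unorm Nu u \<ge> 0"
proof -
  have inX: "inX p Nu (u 0)"
    using assms(2) by (simp add: inUU_def)
  have "0 \<le> Nu 0 (u 0 0)"
    using inX is_norm_on_nonneg[OF assms(1)[rule_format]] by (simp add: inX_def)
  also have "\<dots> \<le> supnorm Nu (u 0)"
    unfolding supnorm_def using inX by (intro cSUP_upper) (auto simp: inX_def)
  also have "\<dots> \<le> unorm Nu u"
    unfolding unorm_def using assms(2) by (intro cSUP_upper) (auto simp: inUU_def)
  finally show ?thesis .
qed

lemma bdd_above_W_of_inX:
  assumes norms: "\<forall>i. is_norm_on (Rn (n i)) (N i)"
    and A: "\<forall>i. A i \<subseteq> Rn (n i)" "\<forall>i. A i \<noteq> {}" "\<forall>i. \<forall>a\<in>A i. N i a \<le> C"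
    and upper: "\<forall>i. \<forall>z\<in>Rn (n i). W i z \<le> wu i (setdist_N (N i) (A i) z)"
    and wU: "classK wU" "\<forall>i. \<forall>s\<ge>0. wu i s \<le> wU s"
    and x: "inX n N x"
  shows "bdd_above (range (\<lambda>i. W i (x i)))"
proof -
  obtain B where B: "\<And>i. N i (x i) \<le> B"
    using x by (auto simp: inX_def bdd_above_def)
  have "W i (x i) \<le> wU (B + C)" for i
  proof -
    let ?d = "setdist_N (N i) (A i) (x i)"
    have xi: "x i \<in> Rn (n i)"
      using x by (simp add: inX_def)
    obtain a where a: "a \<in> A i"
      using A(2) by blast
    have d_nonneg: "0 \<le> ?d"
      using setdist_N_nonneg[OF norms[rule_format] A(1)[rule_format] A(2)[rule_format] xi] .
    have "?d \<le> N i (x i) + N i a"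
      using setdist_N_le_norm_add[OF norms[rule_format] A(1)[rule_format] xi a] .
    also have "\<dots> \<le> B + C"
      using B[of i] A(3) a by (simp add: add_mono)
    finally have d_le: "?d \<le> B + C" .
    have "W i (x i) \<le> wu i ?d"
      using upper xi by simp
    also have "\<dots> \<le> wU ?d"
      using wU(2) d_nonneg by simp
    also have "\<dots> \<le> wU (B + C)"
      using classK_mono[OF wU(1) d_nonneg d_le] .
    finally show ?thesis .
  qed
  then show ?thesis
    by (rule bdd_aboveI2)
qed

lemma bdd_above_norms_of_bdd_above_W:
  assumes norms: "\<forall>i. is_norm_on (Rn (n i)) (N i)"
    and A: "\<forall>i. A i \<subseteq> Rn (n i)" "\<forall>i. A i \<noteq> {}" "\<forall>i. \<forall>a\<in>A i. N i a \<le> C"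
    and lower: "\<forall>i. \<forall>z\<in>Rn (n i). wl i (setdist_N (N i) (A i) z) \<le> W i z"
    and wL: "classKinf wL" "\<forall>i. \<forall>s\<ge>0. wL s \<le> wl i s"
    and y: "\<forall>i. y i \<in> Rn (n i)" "bdd_above (range (\<lambda>i. W i (y i)))"
  shows "bdd_above (range (\<lambda>i. N i (y i)))"
proof -
  obtain K where K: "\<And>i. W i (y i) \<le> K"
    using y(2) by (auto simp: bdd_above_def)
  obtain D where D: "\<And>s. wL s \<le> K \<Longrightarrow> s \<le> D"
    using classKinf_sublevel_bounded[OF wL(1)] by blast
  have "N i (y i) \<le> D + C" for i
  proof -
    let ?d = "setdist_N (N i) (A i) (y i)"
    have "0 \<le> ?d"
      using setdist_N_nonneg[OF norms[rule_format] A(1)[rule_format] A(2)[rule_format]] y(1) by simp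
    then have "wL ?d \<le> wl i ?d"
      using wL(2) by simp
    also have "\<dots> \<le> W i (y i)"
      using lower y(1) by simp
    also have "\<dots> \<le> K"
      by (rule K)
    finally have "?d \<le> D"
      by (rule D)
    moreover have "N i (y i) \<le> ?d + C"
      using norm_le_setdist_N_add[OF norms[rule_format] A(1)[rule_format] A(2)[rule_format]] A(3) y(1)
      by simp
    ultimately show ?thesis by linarith
  qed
  then show ?thesis
    by (rule bdd_aboveI2)
qed

theorem theorem1:
  fixes n p :: "nat \<Rightarrow> nat"
    and N Nu :: "nat \<Rightarrow> vec \<Rightarrow> real"
    and I :: "nat \<Rightarrow> nat set"
    and f :: "nat \<Rightarrow> vec \<Rightarrow> state \<Rightarrow> vec \<Rightarrow> vec"
    and M :: nat
    and A :: "nat \<Rightarrow> vec set"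
    and W :: "nat \<Rightarrow> vec \<Rightarrow> real"
    and wl wu :: "nat \<Rightarrow> real \<Rightarrow> real"
    and \<gamma> :: "nat \<Rightarrow> nat \<Rightarrow> real \<Rightarrow> real"
    and \<gamma>u :: "nat \<Rightarrow> real \<Rightarrow> real"
  assumes n_pos: "\<forall>i. n i > 0" and p_pos: "\<forall>i. p i > 0"
    and norms: "\<forall>i. is_norm_on (Rn (n i)) (N i)" and unorms: "\<forall>i. is_norm_on (Rn (p i)) (Nu i)"
    and I_fin: "\<forall>i. finite (I i)" and I_irr: "\<forall>i. i \<notin> I i"
    and I_inv_fin: "\<forall>i. finite {j. i \<in> I j}"
    and f_cont: "\<forall>i. continuous_on (fdom n p I i) (\<lambda>(a, b, c). f i a b c)"
    and f_range: "\<forall>i. \<forall>(a, b, c)\<in>fdom n p I i. f i a b c \<in> Rn (n i)"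
    and M_pos: "M \<ge> 1"
    and A_sub: "\<forall>i. A i \<subseteq> Rn (n i)" and A_ne: "\<forall>i. A i \<noteq> {}" and A_closed: "\<forall>i. closed (A i)"
    and A_bdd: "\<exists>C>0. \<forall>i. \<forall>z\<in>A i. N i z \<le> C"
    and W_cont: "\<forall>i. continuous_on (Rn (n i)) (W i)"
    and W_nonneg: "\<forall>i. \<forall>z\<in>Rn (n i). W i z \<ge> 0"
    and wl_K: "\<forall>i. classKinf (wl i)" and wu_K: "\<forall>i. classKinf (wu i)"
    and \<gamma>_K: "\<forall>i j. classKinf (\<gamma> i j) \<or> (\<forall>s\<ge>0. \<gamma> i j s = 0)"
    and \<gamma>u_K: "\<forall>i. classK (\<gamma>u i)"
    and sandwich: "\<forall>i. \<forall>\<xi>i\<in>Rn (n i).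
          wl i (setdist_N (N i) (A i) \<xi>i) \<le> W i \<xi>i \<and> W i \<xi>i \<le> wu i (setdist_N (N i) (A i) \<xi>i)"
    and decay: "\<forall>i. \<forall>\<xi> u. inX n N \<xi> \<longrightarrow> inUU p Nu u \<longrightarrow>
          ereal (W i (traj f I \<xi> u M i))
            \<le> max (SUP j. ereal (\<gamma> i j (W j (\<xi> j)))) (ereal (\<gamma>u i (unorm Nu u)))"
    and unif_w: "\<exists>wL wU. classKinf wL \<and> classKinf wU \<and>
          (\<forall>i. \<forall>s\<ge>0. wL s \<le> wl i s \<and> wl i s \<le> wu i s \<and> wu i s \<le> wU s)"
    and unif_\<gamma>: "\<exists>\<alpha>. classKinf \<alpha> \<and> (\<forall>s>0. \<alpha> s < s) \<and> (\<forall>i j. \<forall>s\<ge>0. \<gamma> i j s \<le> \<alpha> s)"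
    and unif_\<gamma>u: "\<exists>g. classK g \<and> (\<forall>i. \<forall>s\<ge>0. \<gamma>u i s \<le> g s)"
  shows "\<forall>x us. inX n N x \<longrightarrow> (\<forall>k<M. inX p Nu (us k)) \<longrightarrow> inX n N (traj f I x us M)"
proof (intro allI impI)
  fix x us
  assume x: "inX n N x" and us: "\<forall>k<M. inX p Nu (us k)"
  define u where "u = (\<lambda>k. if k < M then us k else (\<lambda>_ _. 0))"
  define y where "y = traj f I x u M"
  have u: "inUU p Nu u"
    unfolding u_def using inUU_pad_zero[OF unorms us] .
  have traj_eq: "traj f I x us M = y"
    unfolding y_def by (rule traj_cong) (simp add: u_def)
  have y_Rn: "\<forall>i. y i \<in> Rn (n i)"
    using traj_in_Rn[OF f_range] x u unfolding y_def by (simp add: inX_def inUU_def)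
  obtain C where C: "\<forall>i. \<forall>a\<in>A i. N i a \<le> C"
    using A_bdd by blast
  obtain wL wU where wL: "classKinf wL" and "classKinf wU"
    and w_bounds: "\<forall>i. \<forall>s\<ge>0. wL s \<le> wl i s \<and> wl i s \<le> wu i s \<and> wu i s \<le> wU s"
    using unif_w by blast
  then have wU: "classK wU"
    by (simp add: classKinf_def)
  have wl_ge: "\<forall>i. \<forall>s\<ge>0. wL s \<le> wl i s" and wu_le: "\<forall>i. \<forall>s\<ge>0. wu i s \<le> wU s"
    using w_bounds by blast+
  have lower: "\<forall>i. \<forall>z\<in>Rn (n i). wl i (setdist_N (N i) (A i) z) \<le> W i z"
    and upper: "\<forall>i. \<forall>z\<in>Rn (n i). W i z \<le> wu i (setdist_N (N i) (A i) z)"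
    using sandwich by blast+
  obtain \<alpha> where \<alpha>: "classKinf \<alpha>" "\<forall>s>0. \<alpha> s < s" "\<forall>i j. \<forall>s\<ge>0. \<gamma> i j s \<le> \<alpha> s"
    using unif_\<gamma> by blast
  then have \<alpha>_0: "\<alpha> 0 = 0"
    by (simp add: classKinf_def classK_def)
  obtain g where "\<forall>i. \<forall>s\<ge>0. \<gamma>u i s \<le> g s"
    using unif_\<gamma>u by blast
  then have \<gamma>u_le: "\<gamma>u i (unorm Nu u) \<le> g (unorm Nu u)" for i
    using unorm_nonneg[OF unorms u] by blast
  obtain K where "\<And>j. W j (x j) \<le> K"
    using bdd_above_W_of_inX[OF norms A_sub A_ne C upper wU wu_le x] by (auto simp: bdd_above_def)
  then have W_x: "\<forall>j. 0 \<le> W j (x j) \<and> W j (x j) \<le> K"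
    using W_nonneg x by (simp add: inX_def)
  have "W i (y i) \<le> max K (g (unorm Nu u))" for i
  proof -
    have "\<forall>j. \<forall>s\<ge>0. \<gamma> i j s \<le> \<alpha> s"
      using \<alpha>(3) by blast
    then show ?thesis
      unfolding y_def
      by (rule le_max_of_ereal_le_max_SUP_gains[where \<gamma> = "\<gamma> i" and w = "\<lambda>j. W j (x j)",
            OF decay[rule_format, OF x u, of i] W_x _ \<alpha>(2) \<alpha>_0 \<gamma>u_le[of i]])
  qed
  then have "bdd_above (range (\<lambda>i. W i (y i)))"
    by (rule bdd_aboveI2)
  then have "bdd_above (range (\<lambda>i. N i (y i)))"
    by (rule bdd_above_norms_of_bdd_above_W[OF norms A_sub A_ne C lower wL wl_ge y_Rn])
  then show "inX n N (traj f I x us M)"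
    using y_Rn unfolding traj_eq by (simp add: inX_def)
qed

end
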